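(* Let $V$ be a finite set and $\mu\colon\binom V2\to\mathbb{Z}_+$. If there is a vertex $v\in V$ such that $\mu(e)=1$ for every edge $e\in\binom V2$ containing $v$, then $(\Delta_V)_\mu$ is contractible.
   Context: $(\Delta_V)_\mu$ is the edge inflation of the full simplex on $V$: the poset of pairs $(I,c_I)$ with $\varnothing\neq I\subseteq V$ and $c_I\colon\binom I2\to\mathbb{Z}_+$, $c_I(e)\in\{1,\dots,\mu(e)\}$, ordered by $(I,c_I)<(J,c_J)$ iff $I\subsetneq J$ and $c_I=c_J|_{\binom I2}$; topology refers to the realization of its order complex. *)

theory Defs
  imports "HOL-Analysis.Analysis"
begin

definition edges2 :: "'v set \<Rightarrow> 'v set set" where
  "edges2 I = {e. e \<subseteq> I \<and> card e = 2}"

text \<open>Elements of the edge inflation: pairs (I, c) with I a nonempty subset of V and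
  c a labelling of the 2-subsets of I with c(e) in {1..mu(e)}; c is taken to be 0
  outside the 2-subsets of I so that c is literally a function on binom(I,2).\<close>
definition inflation_elems :: "'v set \<Rightarrow> ('v set \<Rightarrow> nat) \<Rightarrow> ('v set \<times> ('v set \<Rightarrow> nat)) set" where
  "inflation_elems V \<mu> = {(I, c). I \<noteq> {} \<and> I \<subseteq> V \<and>
      (\<forall>e \<in> edges2 I. 1 \<le> c e \<and> c e \<le> \<mu> e) \<and> (\<forall>e. e \<notin> edges2 I \<longrightarrow> c e = 0)}"

definition inflation_less :: "('v set \<times> ('v set \<Rightarrow> nat)) \<Rightarrow> ('v set \<times> ('v set \<Rightarrow> nat)) \<Rightarrow> bool" where
  "inflation_less p q \<longleftrightarrow> fst p \<subset> fst q \<and> (\<forall>e \<in> edges2 (fst p). snd p e = snd q e)"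

text \<open>Geometric realization of the order complex of a finite strict poset (P, lt):
  convex combinations (barycentric coordinates) of elements of P whose support is a chain,
  viewed as a subset of the function space 'a \<Rightarrow> real (product topology).\<close>
definition order_complex_realization :: "'a set \<Rightarrow> ('a \<Rightarrow> 'a \<Rightarrow> bool) \<Rightarrow> ('a \<Rightarrow> real) set" where
  "order_complex_realization P lt = {x. (\<forall>p. 0 \<le> x p) \<and> (\<forall>p. p \<notin> P \<longrightarrow> x p = 0) \<and>
      sum x P = 1 \<and>
      (\<forall>p q. 0 < x p \<and> 0 < x q \<and> p \<noteq> q \<longrightarrow> lt p q \<or> lt q p)}"

definition edge_inflation_realization :: "'v set \<Rightarrow> ('v set \<Rightarrow> nat) \<Rightarrow> (('v set \<times> ('v set \<Rightarrow> nat)) \<Rightarrow> real) set" where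
  "edge_inflation_realization V \<mu> = order_complex_realization (inflation_elems V \<mu>) inflation_less"

end

theory Submission
  imports Defs
begin

(* If every edge at v has multiplicity one, then adding v to a face (I, c) and colouring the new
   edges 1 is an order-preserving map f of the poset with p <= f p >= ({v}, 0).  Comparable
   order-preserving maps g <= h induce homotopic maps of order complexes: stack the barycentric
   weights of a point along its chain, push the part below height 1 - t forward by g and the rest
   by h; everything sent by g lies below everything sent by h, so the image stays on a chain.
   Hence the identity is homotopic to |f|, which is homotopic to the constant map at ({v}, 0). *)

lemma order_complex_realizationI:
  assumes "\<And>p. 0 \<le> x p" "\<And>p. p \<notin> P \<Longrightarrow> x p = 0" "sum x P = 1"
    and "\<And>p q. 0 < x p \<Longrightarrow> 0 < x q \<Longrightarrow> p \<noteq> q \<Longrightarrow> lt p q \<or> lt q p"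
  shows "x \<in> order_complex_realization P lt"
  using assms unfolding order_complex_realization_def by blast

lemma order_complex_realizationD:
  assumes "x \<in> order_complex_realization P lt"
  shows "0 \<le> x p" "p \<notin> P \<Longrightarrow> x p = 0" "sum x P = 1"
    and "0 < x p \<Longrightarrow> 0 < x q \<Longrightarrow> p \<noteq> q \<Longrightarrow> lt p q \<or> lt q p"
  using assms unfolding order_complex_realization_def by auto

definition order_complex_map :: "'a set \<Rightarrow> ('a \<Rightarrow> 'b) \<Rightarrow> ('a \<Rightarrow> real) \<Rightarrow> 'b \<Rightarrow> real" where
  "order_complex_map P g x q = (\<Sum>p\<in>{p\<in>P. g p = q}. x p)"

lemma order_complex_map_nonneg: "(\<And>p. 0 \<le> x p) \<Longrightarrow> 0 \<le> order_complex_map P g x q"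
  unfolding order_complex_map_def by (simp add: sum_nonneg)

lemma order_complex_map_pos:
  assumes "\<And>p. 0 \<le> x p" and "0 < order_complex_map P g x q"
  shows "\<exists>p\<in>P. g p = q \<and> 0 < x p"
proof (rule ccontr)
  assume "\<not> ?thesis"
  then have "x p = 0" if "p \<in> {p\<in>P. g p = q}" for p
    using assms(1)[of p] that by auto
  then show False
    using assms(2) by (simp add: order_complex_map_def)
qed

lemma order_complex_map_outside: "g ` P \<subseteq> Q \<Longrightarrow> q \<notin> Q \<Longrightarrow> order_complex_map P g x q = 0"
  unfolding order_complex_map_def by (rule sum.neutral) auto

lemma sum_order_complex_map:
  "finite P \<Longrightarrow> finite Q \<Longrightarrow> g ` P \<subseteq> Q \<Longrightarrow> sum (order_complex_map P g x) Q = sum x P"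
  unfolding order_complex_map_def by (rule sum.group)

lemma order_complex_map_id:
  assumes "\<And>p. p \<notin> P \<Longrightarrow> x p = 0"
  shows "order_complex_map P id x = x"
proof
  fix q
  have "{p\<in>P. id p = q} = (if q \<in> P then {q} else {})" by auto
  then show "order_complex_map P id x q = x q"
    using assms by (simp add: order_complex_map_def)
qed

lemma order_complex_map_const: "order_complex_map P (\<lambda>_. w) x = (\<lambda>q. if q = w then sum x P else 0)"
  by (auto simp: fun_eq_iff order_complex_map_def)

lemma continuous_on_order_complex_map [continuous_intros]:
  "(\<And>p. continuous_on S (\<lambda>z. x z p)) \<Longrightarrow> continuous_on S (\<lambda>z. order_complex_map P g (x z) q)"
  unfolding order_complex_map_def by (intro continuous_on_sum) simp

lemma continuous_on_snd_apply [continuous_intros]: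
  "continuous_on S (\<lambda>z::'b::topological_space \<times> ('a \<Rightarrow> 'c::topological_space). snd z p)"
  by (rule continuous_on_compose2[OF continuous_on_product_coordinates continuous_on_snd]) auto

definition mass_below :: "'a set \<Rightarrow> ('a \<Rightarrow> 'a \<Rightarrow> bool) \<Rightarrow> ('a \<Rightarrow> real) \<Rightarrow> 'a \<Rightarrow> real" where
  "mass_below P lt x p = (\<Sum>q\<in>{q\<in>P. lt q p}. x q)"

lemma mass_below_nonneg: "(\<And>p. 0 \<le> x p) \<Longrightarrow> 0 \<le> mass_below P lt x p"
  unfolding mass_below_def by (simp add: sum_nonneg)

lemma mass_below_add_self:
  assumes "finite P" "irreflp lt" "\<And>p. p \<notin> P \<Longrightarrow> x p = 0"
  shows "mass_below P lt x p + x p = sum x {q\<in>P. lt\<^sup>=\<^sup>= q p}"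
proof (cases "p \<in> P")
  case True
  then have "{q\<in>P. lt\<^sup>=\<^sup>= q p} = insert p {q\<in>P. lt q p}" by auto
  moreover have "p \<notin> {q\<in>P. lt q p}" using assms(2) by (simp add: irreflpD)
  ultimately show ?thesis
    using assms(1) by (simp add: mass_below_def)
next
  case False
  then have "{q\<in>P. lt\<^sup>=\<^sup>= q p} = {q\<in>P. lt q p}" by auto
  then show ?thesis using False assms(3) by (simp add: mass_below_def)
qed

lemma mass_below_add_le_one:
  assumes "finite P" "irreflp lt" "x \<in> order_complex_realization P lt"
  shows "mass_below P lt x p + x p \<le> 1"
proof -
  have "mass_below P lt x p + x p = sum x {q\<in>P. lt\<^sup>=\<^sup>= q p}"
    using assms by (intro mass_below_add_self) (auto dest: order_complex_realizationD)
  also have "\<dots> \<le> sum x P"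
    using assms by (intro sum_mono2) (auto dest: order_complex_realizationD)
  finally show ?thesis
    using order_complex_realizationD(3)[OF assms(3)] by simp
qed

lemma mass_below_add_le_mass_below:
  assumes "finite P" "transp lt" "irreflp lt" "x \<in> order_complex_realization P lt" "lt p' p"
  shows "mass_below P lt x p' + x p' \<le> mass_below P lt x p"
proof -
  have "mass_below P lt x p' + x p' = sum x {q\<in>P. lt\<^sup>=\<^sup>= q p'}"
    using assms by (intro mass_below_add_self) (auto dest: order_complex_realizationD)
  also have "\<dots> \<le> mass_below P lt x p"
    unfolding mass_below_def using assms
    by (intro sum_mono2) (auto dest: order_complex_realizationD transpD)
  finally show ?thesis .
qed

text \<open>Stack the mass of \<open>x\<close> along its chain, from the bottom up; \<open>sweep_lower P lt t x\<close>
  is the part of \<open>x\<close> lying below height \<open>1 - t\<close>.\<close>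
definition sweep_lower :: "'a set \<Rightarrow> ('a \<Rightarrow> 'a \<Rightarrow> bool) \<Rightarrow> real \<Rightarrow> ('a \<Rightarrow> real) \<Rightarrow> 'a \<Rightarrow> real" where
  "sweep_lower P lt t x p = max 0 (min (x p) (1 - t - mass_below P lt x p))"

lemma sweep_lower_nonneg: "0 \<le> sweep_lower P lt t x p"
  by (simp add: sweep_lower_def)

lemma sweep_lower_le: "0 \<le> x p \<Longrightarrow> sweep_lower P lt t x p \<le> x p"
  by (simp add: sweep_lower_def)

lemma sweep_lower_start:
  assumes "finite P" "irreflp lt" "x \<in> order_complex_realization P lt"
  shows "sweep_lower P lt 0 x = x"
proof
  fix p
  show "sweep_lower P lt 0 x p = x p"
    using mass_below_add_le_one[OF assms, of p] order_complex_realizationD(1)[OF assms(3), of p]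
    by (simp add: sweep_lower_def)
qed

lemma sweep_lower_end:
  assumes "x \<in> order_complex_realization P lt"
  shows "sweep_lower P lt 1 x = (\<lambda>_. 0)"
proof
  fix p
  show "sweep_lower P lt 1 x p = 0"
    using mass_below_nonneg[of x P lt p] order_complex_realizationD(1)[OF assms]
    by (simp add: sweep_lower_def)
qed

lemma sweep_lower_below_rest:
  assumes "finite P" "transp lt" "irreflp lt" and x: "x \<in> order_complex_realization P lt"
    and "0 < sweep_lower P lt t x p" "sweep_lower P lt t x p' < x p'"
  shows "lt\<^sup>=\<^sup>= p p'"
proof (rule ccontr)
  assume "\<not> lt\<^sup>=\<^sup>= p p'"
  have p: "0 < x p" "mass_below P lt x p < 1 - t"
    using assms(5) by (auto simp: sweep_lower_def)
  have p': "0 < x p'" "1 - t - mass_below P lt x p' < x p'"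
    using assms(6) order_complex_realizationD(1)[OF x, of p'] by (auto simp: sweep_lower_def)
  have "lt p' p"
    using order_complex_realizationD(4)[OF x p(1) p'(1)] \<open>\<not> lt\<^sup>=\<^sup>= p p'\<close> by auto
  then have "mass_below P lt x p' + x p' \<le> mass_below P lt x p"
    by (rule mass_below_add_le_mass_below[OF assms(1-3) x])
  then show False
    using p p' by linarith
qed

lemma continuous_on_sweep_lower [continuous_intros]:
  "continuous_on S t \<Longrightarrow> (\<And>p. continuous_on S (\<lambda>z. x z p)) \<Longrightarrow>
    continuous_on S (\<lambda>z. sweep_lower P lt (t z) (x z) p)"
  unfolding sweep_lower_def mass_below_def by (intro continuous_intros) auto

lemma order_complex_map_add_mem:
  fixes lt :: "'a \<Rightarrow> 'a \<Rightarrow> bool" and lt' :: "'b \<Rightarrow> 'b \<Rightarrow> bool"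
  assumes "finite P" "finite Q" "transp lt'"
    and x: "x \<in> order_complex_realization P lt"
    and uv: "\<And>p. 0 \<le> u p" "\<And>p. 0 \<le> v p" "\<And>p. u p + v p = x p"
    and below: "\<And>a b. 0 < u a \<Longrightarrow> 0 < v b \<Longrightarrow> lt\<^sup>=\<^sup>= a b"
    and maps: "g ` P \<subseteq> Q" "h ` P \<subseteq> Q"
    and mono: "monotone_on P lt\<^sup>=\<^sup>= lt'\<^sup>=\<^sup>= g" "monotone_on P lt\<^sup>=\<^sup>= lt'\<^sup>=\<^sup>= h"
    and le: "\<And>p. p \<in> P \<Longrightarrow> lt'\<^sup>=\<^sup>= (g p) (h p)"
  shows "(\<lambda>q. order_complex_map P g u q + order_complex_map P h v q) \<in> order_complex_realization Q lt'"
    (is "?y \<in> _")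
proof (rule order_complex_realizationI)
  show "0 \<le> ?y q" for q
    using uv by (simp add: add_nonneg_nonneg order_complex_map_nonneg)
  show "?y q = 0" if "q \<notin> Q" for q
    using maps that by (simp add: order_complex_map_outside)
  have "sum ?y Q = sum u P + sum v P"
    using assms(1,2) maps by (simp add: sum.distrib sum_order_complex_map)
  also have "\<dots> = 1"
    using order_complex_realizationD(3)[OF x] uv(3) by (simp flip: sum.distrib)
  finally show "sum ?y Q = 1" .
  have source: "\<exists>p\<in>P. 0 < x p \<and> (q = g p \<and> 0 < u p \<or> q = h p \<and> 0 < v p)" if "0 < ?y q" for q
  proof -
    have "0 < order_complex_map P g u q \<or> 0 < order_complex_map P h v q"
      using that by linarith
    then show ?thesis
      using order_complex_map_pos[of u P g q] order_complex_map_pos[of v P h q] uv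
      by (metis add_pos_nonneg add_nonneg_pos)
  qed
  have "transp lt'\<^sup>=\<^sup>="
    using assms(3) by simp
  then have g_le_h: "lt'\<^sup>=\<^sup>= (g a) (h b)" if "a \<in> P" "b \<in> P" "lt\<^sup>=\<^sup>= a b" for a b
    using monotone_onD[OF mono(1) that] le[OF that(2)] by (blast dest: transpD)
  show "lt' q1 q2 \<or> lt' q2 q1" if pos: "0 < ?y q1" "0 < ?y q2" and "q1 \<noteq> q2" for q1 q2
  proof -
    obtain a where a: "a \<in> P" "0 < x a" "q1 = g a \<and> 0 < u a \<or> q1 = h a \<and> 0 < v a"
      using source[OF pos(1)] by blast
    obtain b where b: "b \<in> P" "0 < x b" "q2 = g b \<and> 0 < u b \<or> q2 = h b \<and> 0 < v b"
      using source[OF pos(2)] by blast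
    have chain: "lt\<^sup>=\<^sup>= a b \<or> lt\<^sup>=\<^sup>= b a"
      using order_complex_realizationD(4)[OF x a(2) b(2)] by auto
    have "lt'\<^sup>=\<^sup>= q1 q2 \<or> lt'\<^sup>=\<^sup>= q2 q1"
      using a(3) b(3)
    proof (elim disjE conjE)
      assume "q1 = g a" "q2 = g b"
      then show ?thesis using chain monotone_onD[OF mono(1)] a(1) b(1) by blast
    next
      assume "q1 = g a" "0 < u a" "q2 = h b" "0 < v b"
      then show ?thesis using g_le_h a(1) b(1) below by blast
    next
      assume "q1 = h a" "0 < v a" "q2 = g b" "0 < u b"
      then show ?thesis using g_le_h a(1) b(1) below by blast
    next
      assume "q1 = h a" "q2 = h b"
      then show ?thesis using chain monotone_onD[OF mono(2)] a(1) b(1) by blast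
    qed
    then show ?thesis
      using \<open>q1 \<noteq> q2\<close> by auto
  qed
qed

lemma homotopic_order_complex_maps:
  fixes lt :: "'a \<Rightarrow> 'a \<Rightarrow> bool" and lt' :: "'b \<Rightarrow> 'b \<Rightarrow> bool"
  assumes "finite P" "finite Q" "transp lt" "irreflp lt" "transp lt'"
    and maps: "g ` P \<subseteq> Q" "h ` P \<subseteq> Q"
    and mono: "monotone_on P lt\<^sup>=\<^sup>= lt'\<^sup>=\<^sup>= g" "monotone_on P lt\<^sup>=\<^sup>= lt'\<^sup>=\<^sup>= h"
    and le: "\<And>p. p \<in> P \<Longrightarrow> lt'\<^sup>=\<^sup>= (g p) (h p)"
  shows "homotopic_with_canon (\<lambda>_. True) (order_complex_realization P lt) (order_complex_realization Q lt')
           (order_complex_map P g) (order_complex_map P h)"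
proof -
  define H where "H z = (\<lambda>q. order_complex_map P g (sweep_lower P lt (fst z) (snd z)) q
      + order_complex_map P h (\<lambda>p. snd z p - sweep_lower P lt (fst z) (snd z) p) q)"
    for z :: "real \<times> ('a \<Rightarrow> real)"
  have "continuous_on UNIV H"
    unfolding H_def by (intro continuous_on_coordinatewise_then_product continuous_intros)
  then have cont: "continuous_on ({0..1} \<times> order_complex_realization P lt) H"
    by (rule continuous_on_subset) simp
  have mem: "H (t, x) \<in> order_complex_realization Q lt'" if x: "x \<in> order_complex_realization P lt" for t x
    unfolding H_def fst_conv snd_conv
  proof (rule order_complex_map_add_mem[OF assms(1,2,5) x _ _ _ _ maps mono le])
    show "0 \<le> sweep_lower P lt t x p" for p
      by (rule sweep_lower_nonneg)
    show "0 \<le> x p - sweep_lower P lt t x p" for p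
      using sweep_lower_le[of x p] order_complex_realizationD(1)[OF x, of p] by simp
    show "lt\<^sup>=\<^sup>= a b" if "0 < sweep_lower P lt t x a" "0 < x b - sweep_lower P lt t x b" for a b
      using sweep_lower_below_rest[OF assms(1,3,4) x] that by simp
  qed simp
  have start: "H (0, x) = order_complex_map P g x" and finish: "H (1, x) = order_complex_map P h x"
    if "x \<in> order_complex_realization P lt" for x
    using that by (simp_all add: H_def sweep_lower_start[OF assms(1,4)] sweep_lower_end
        order_complex_map_def fun_eq_iff)
  show ?thesis
    by (subst homotopic_with; simp)
      (use cont mem start finish in \<open>auto intro!: exI[of _ H]
         simp: continuous_map_subtopology_eu subtopology_Times[symmetric]\<close>)
qed

lemma contractible_order_complex_realization:
  assumes "finite P" "transp lt" "irreflp lt"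
    and "f ` P \<subseteq> P" "monotone_on P lt\<^sup>=\<^sup>= lt\<^sup>=\<^sup>= f" "\<And>p. p \<in> P \<Longrightarrow> lt\<^sup>=\<^sup>= p (f p)"
    and "w \<in> P" "\<And>p. p \<in> P \<Longrightarrow> lt\<^sup>=\<^sup>= w (f p)"
  shows "contractible (order_complex_realization P lt)"
proof -
  let ?S = "order_complex_realization P lt"
  have "homotopic_with_canon (\<lambda>_. True) ?S ?S (order_complex_map P id) (order_complex_map P f)"
    using assms by (intro homotopic_order_complex_maps) (auto intro: monotone_onI)
  moreover have "homotopic_with_canon (\<lambda>_. True) ?S ?S (order_complex_map P (\<lambda>_. w)) (order_complex_map P f)"
    using assms by (intro homotopic_order_complex_maps) (auto intro: monotone_onI)
  ultimately have "homotopic_with_canon (\<lambda>_. True) ?S ?S (order_complex_map P id) (order_complex_map P (\<lambda>_. w))"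
    by (metis homotopic_with_symD homotopic_with_trans)
  then have "homotopic_with_canon (\<lambda>_. True) ?S ?S id (\<lambda>_ q. if q = w then 1 else 0)"
  proof (rule homotopic_with_eq)
    fix x assume "x \<in> topspace (top_of_set ?S)"
    then have x: "x \<in> ?S" by simp
    show "id x = order_complex_map P id x"
      using order_complex_realizationD(2)[OF x] by (simp add: order_complex_map_id)
    show "(\<lambda>q. if q = w then 1 else 0) = order_complex_map P (\<lambda>_. w) x"
      using order_complex_realizationD(3)[OF x] by (simp add: order_complex_map_const fun_eq_iff)
  qed simp
  then show ?thesis
    unfolding contractible_def by blast
qed

lemma edges2_mono: "I \<subseteq> J \<Longrightarrow> edges2 I \<subseteq> edges2 J"
  unfolding edges2_def by auto

lemma edges2_singleton [simp]: "edges2 {v} = {}"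
  by (auto simp: edges2_def subset_singleton_iff)

lemma edges2_insert_not_mem: "e \<in> edges2 (insert v I) \<Longrightarrow> v \<notin> e \<Longrightarrow> e \<in> edges2 I"
  unfolding edges2_def by auto

lemma finite_edges2: "finite V \<Longrightarrow> finite (edges2 V)"
  unfolding edges2_def by simp

lemma finite_inflation_elems:
  assumes "finite V"
  shows "finite (inflation_elems V \<mu>)"
proof -
  let ?m = "\<Sum>e\<in>edges2 V. \<mu> e"
  let ?C = "{c. \<forall>e. (e \<in> edges2 V \<longrightarrow> c e \<in> {..?m}) \<and> (e \<notin> edges2 V \<longrightarrow> c e = 0)}"
  have "inflation_elems V \<mu> \<subseteq> Pow V \<times> ?C"
  proof clarify
    fix I c assume Ic: "(I, c) \<in> inflation_elems V \<mu>"
    then have I: "I \<subseteq> V" and edges: "edges2 I \<subseteq> edges2 V"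
      using edges2_mono by (auto simp: inflation_elems_def)
    have "c e \<le> ?m" if "e \<in> edges2 V" for e
    proof (cases "e \<in> edges2 I")
      case True
      then have "c e \<le> \<mu> e" using Ic by (simp add: inflation_elems_def)
      also have "\<dots> \<le> ?m" using that finite_edges2[OF assms] by (intro member_le_sum) auto
      finally show ?thesis .
    qed (use Ic in \<open>simp add: inflation_elems_def\<close>)
    then show "I \<in> Pow V \<and> c \<in> ?C"
      using Ic I edges by (auto simp: inflation_elems_def)
  qed
  moreover have "finite ?C"
    using finite_edges2[OF assms] by (intro finite_set_of_finite_funs) auto
  ultimately show ?thesis
    using assms by (meson finite_Pow_iff finite_SigmaI finite_subset)
qed

lemma transp_inflation_less: "transp inflation_less"
proof (rule transpI)
  fix p q r assume "inflation_less p q" "inflation_less q r"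
  then show "inflation_less p r"
    unfolding inflation_less_def using edges2_mono[of "fst p" "fst q"] by auto
qed

lemma irreflp_inflation_less: "irreflp inflation_less"
  by (simp add: irreflpI inflation_less_def)

fun add_vertex :: "'v \<Rightarrow> 'v set \<times> ('v set \<Rightarrow> nat) \<Rightarrow> 'v set \<times> ('v set \<Rightarrow> nat)" where
  "add_vertex v (I, c) =
     (insert v I, \<lambda>e. if e \<in> edges2 (insert v I) then if v \<in> e then 1 else c e else 0)"

lemma add_vertex_mem_inflation_elems:
  assumes "v \<in> V" "\<forall>e\<in>edges2 V. v \<in> e \<longrightarrow> \<mu> e = 1" "p \<in> inflation_elems V \<mu>"
  shows "add_vertex v p \<in> inflation_elems V \<mu>"
proof -
  obtain I c where p: "p = (I, c)" by fastforce
  have IV: "insert v I \<subseteq> V" and c: "\<forall>e\<in>edges2 I. 1 \<le> c e \<and> c e \<le> \<mu> e"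
    using assms(1,3) by (auto simp: p inflation_elems_def)
  have "\<mu> e = 1" if "e \<in> edges2 (insert v I)" "v \<in> e" for e
    using assms(2) edges2_mono[OF IV] that by auto
  then show ?thesis
    using IV c by (auto simp: p inflation_elems_def dest: edges2_insert_not_mem)
qed

lemma inflation_le_add_vertex:
  assumes "\<forall>e\<in>edges2 V. v \<in> e \<longrightarrow> \<mu> e = 1" "p \<in> inflation_elems V \<mu>"
  shows "inflation_less\<^sup>=\<^sup>= p (add_vertex v p)"
proof -
  obtain I c where p: "p = (I, c)" by fastforce
  show ?thesis
  proof (cases "v \<in> I")
    case True
    have "c e = (if e \<in> edges2 I then if v \<in> e then 1 else c e else 0)" for e
      using assms edges2_mono[of I V] by (fastforce simp: p inflation_elems_def)
    then have "add_vertex v p = p"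
      using True by (simp add: p insert_absorb fun_eq_iff)
    then show ?thesis by simp
  next
    case False
    then show ?thesis by (auto simp: p inflation_less_def edges2_def)
  qed
qed

lemma monotone_add_vertex:
  fixes v :: 'v
  shows "monotone inflation_less\<^sup>=\<^sup>= inflation_less\<^sup>=\<^sup>= (add_vertex v)"
proof (rule monotoneI)
  fix p q :: "'v set \<times> ('v set \<Rightarrow> nat)"
  assume "inflation_less\<^sup>=\<^sup>= p q"
  then consider "p = q" | "inflation_less p q" by blast
  then show "inflation_less\<^sup>=\<^sup>= (add_vertex v p) (add_vertex v q)"
  proof cases
    case 2
    obtain I c J d where pq: "p = (I, c)" "q = (J, d)" by fastforce
    have IJ: "I \<subseteq> J" and agree: "\<forall>e\<in>edges2 I. c e = d e"
      using 2 by (auto simp: pq inflation_less_def)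
    have edges: "edges2 (insert v I) \<subseteq> edges2 (insert v J)"
      using IJ by (intro edges2_mono) auto
    have agree': "c e = d e" if "e \<in> edges2 (insert v I)" "v \<notin> e" for e
      using agree edges2_insert_not_mem[OF that] by blast
    show ?thesis
    proof (cases "insert v I = insert v J")
      case True
      then have "add_vertex v p = add_vertex v q"
        using agree' by (simp add: pq fun_eq_iff)
      then show ?thesis by simp
    next
      case False
      then have "insert v I \<subset> insert v J"
        using IJ by auto
      then show ?thesis
        using edges agree' by (auto simp: pq inflation_less_def)
    qed
  qed simp
qed

lemma singleton_le_add_vertex:
  fixes v :: 'v and p :: "'v set \<times> ('v set \<Rightarrow> nat)"
  shows "inflation_less\<^sup>=\<^sup>= ({v}, \<lambda>_. 0) (add_vertex v p)"
proof -
  obtain I c where p: "p = (I, c)" by fastforce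
  show ?thesis
  proof (cases "insert v I = {v}")
    case True
    show ?thesis
      unfolding p add_vertex.simps True by simp
  next
    case False
    then show ?thesis by (auto simp: p inflation_less_def)
  qed
qed

theorem corollary4p10:
  fixes V :: "'v set" and \<mu> :: "'v set \<Rightarrow> nat" and v :: 'v
  assumes "finite V"
    and "\<forall>e \<in> edges2 V. 1 \<le> \<mu> e"
    and "v \<in> V"
    and "\<forall>e \<in> edges2 V. v \<in> e \<longrightarrow> \<mu> e = 1"
  shows "contractible (edge_inflation_realization V \<mu>)"
  unfolding edge_inflation_realization_def
proof (rule contractible_order_complex_realization)
  show "finite (inflation_elems V \<mu>)"
    using assms(1) by (rule finite_inflation_elems)
  show "add_vertex v ` inflation_elems V \<mu> \<subseteq> inflation_elems V \<mu>"
    using add_vertex_mem_inflation_elems[OF assms(3,4)] by blast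
  show "monotone_on (inflation_elems V \<mu>) inflation_less\<^sup>=\<^sup>= inflation_less\<^sup>=\<^sup>= (add_vertex v)"
    using monotone_add_vertex by (rule monotone_on_subset) simp
  show "inflation_less\<^sup>=\<^sup>= p (add_vertex v p)" if "p \<in> inflation_elems V \<mu>" for p
    using assms(4) that by (rule inflation_le_add_vertex)
  show "({v}, \<lambda>_. 0) \<in> inflation_elems V \<mu>"
    using assms(3) by (simp add: inflation_elems_def)
  show "inflation_less\<^sup>=\<^sup>= ({v}, \<lambda>_. 0) (add_vertex v p)" for p
    by (rule singleton_le_add_vertex)
qed (rule transp_inflation_less irreflp_inflation_less)+

end
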